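(* Let $\prec$ be an exchangeable random total order on $\mathbb{I}_0=\{a_1,b_1,a_2,b_2,\dots\}$ and let $d$ be the associated function defined below. If $x,y \in \mathbb{I}_0$ with $x \ne y$, then $d(x,y) > 0$ almost surely. Therefore almost surely $d$ is a metric on $\mathbb{I}_0$.
   Context: $\mathbb{I}_0 := \bigcup_{n\in\mathbb{N}}\{a_n,b_n\}$ (all symbols distinct). A random total order $\prec$ on $\mathbb{I}_0$ is a map from the probability space to total orders on $\mathbb{I}_0$ such that $\mathbf{1}\{x\prec y\}$ is a random variable for all $x,y$. It is exchangeable if for every $n\in\mathbb{N}$ and all permutations $\sigma,\tau$ of $\{1,\dots,n\}$ the induced order $\prec^n$ on $\bigcup_{k=1}^n\{a_k,b_k\}$ has the same distribution as $\prec^n_{\sigma,\tau}$, defined by: $a_{\sigma(i)}\prec^n_{\sigma,\tau}b_{\tau(j)}$ iff $a_i\prec^n b_j$; $b_{\tau(i)}\prec^n_{\sigma,\tau}a_{\sigma(j)}$ iff $b_i\prec^n a_j$; $a_{\sigma(i)}\prec^n_{\sigma,\tau}a_{\sigma(j)}$ iff $a_i\prec^n a_j$; $b_{\tau(i)}\prec^n_{\sigma,\tau}b_{\tau(j)}$ iff $b_i\prec^n b_j$. Define $d:\mathbb{I}_0\times\mathbb{I}_0\to[0,1]$ by $d(x,x)=0$, $d(x,y)=d(y,x)$, and for $x\prec y$: \[ d(x,y) := \limsup_{n\to\infty}\frac{1}{2n}\#\{1\le k\le n: x\prec a_k\prec y\} + \limsup_{n\to\infty}\frac{1}{2n}\#\{1\le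 \ell\le n: x\prec b_\ell\prec y\}. \] *)

theory Defs
  imports "HOL-Probability.Probability" "HOL-Combinatorics.Permutations"
begin

text \<open>The index set I_0 = {a_1,b_1,a_2,b_2,...}; we index from 0: A k stands for a_(k+1),
  B k stands for b_(k+1).\<close>
datatype I0 = A nat | B nat

definition random_total_order :: "'w measure \<Rightarrow> ('w \<Rightarrow> I0 \<Rightarrow> I0 \<Rightarrow> bool) \<Rightarrow> bool" where
  "random_total_order M lt \<longleftrightarrow>
     (\<forall>w\<in>space M. (\<forall>x. \<not> lt w x x) \<and>
                    (\<forall>x y z. lt w x y \<longrightarrow> lt w y z \<longrightarrow> lt w x z) \<and>
                    (\<forall>x y. x \<noteq> y \<longrightarrow> lt w x y \<or> lt w y x)) \<and>
     (\<forall>x y. {w\<in>space M. lt w x y} \<in> sets M)"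

definition first_n :: "nat \<Rightarrow> I0 set" where
  "first_n n = A ` {..<n} \<union> B ` {..<n}"

definition restr_ord :: "(I0 \<Rightarrow> I0 \<Rightarrow> bool) \<Rightarrow> nat \<Rightarrow> (I0 \<times> I0) set" where
  "restr_ord lt n = {(x,y). x \<in> first_n n \<and> y \<in> first_n n \<and> lt x y}"

definition relabel :: "(nat \<Rightarrow> nat) \<Rightarrow> (nat \<Rightarrow> nat) \<Rightarrow> I0 \<Rightarrow> I0" where
  "relabel \<sigma> \<tau> x = (case x of A i \<Rightarrow> A (\<sigma> i) | B i \<Rightarrow> B (\<tau> i))"

definition perm_restr_ord :: "(nat \<Rightarrow> nat) \<Rightarrow> (nat \<Rightarrow> nat) \<Rightarrow> (I0 \<Rightarrow> I0 \<Rightarrow> bool) \<Rightarrow> nat \<Rightarrow> (I0 \<times> I0) set" where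
  "perm_restr_ord \<sigma> \<tau> lt n = map_prod (relabel \<sigma> \<tau>) (relabel \<sigma> \<tau>) ` restr_ord lt n"

definition exchangeable :: "'w measure \<Rightarrow> ('w \<Rightarrow> I0 \<Rightarrow> I0 \<Rightarrow> bool) \<Rightarrow> bool" where
  "exchangeable M lt \<longleftrightarrow>
     (\<forall>n \<sigma> \<tau>. \<sigma> permutes {..<n} \<longrightarrow> \<tau> permutes {..<n} \<longrightarrow>
        (\<forall>R. measure M {w\<in>space M. restr_ord (lt w) n = R}
           = measure M {w\<in>space M. perm_restr_ord \<sigma> \<tau> (lt w) n = R}))"

definition d_pos :: "(I0 \<Rightarrow> I0 \<Rightarrow> bool) \<Rightarrow> I0 \<Rightarrow> I0 \<Rightarrow> real" where
  "d_pos lt x y =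
     real_of_ereal (limsup (\<lambda>n. ereal (real (card {k. k < n \<and> lt x (A k) \<and> lt (A k) y}) / (2 * real n))))
   + real_of_ereal (limsup (\<lambda>n. ereal (real (card {k. k < n \<and> lt x (B k) \<and> lt (B k) y}) / (2 * real n))))"

definition dist_ord :: "(I0 \<Rightarrow> I0 \<Rightarrow> bool) \<Rightarrow> I0 \<Rightarrow> I0 \<Rightarrow> real" where
  "dist_ord lt x y = (if x = y then 0 else if lt x y then d_pos lt x y else d_pos lt y x)"

definition is_metric :: "(I0 \<Rightarrow> I0 \<Rightarrow> real) \<Rightarrow> bool" where
  "is_metric d \<longleftrightarrow> (\<forall>x y. d x y = 0 \<longleftrightarrow> x = y) \<and> (\<forall>x y. d x y = d y x)
      \<and> (\<forall>x y z. d x z \<le> d x y + d y z)"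

end

theory Submission
  imports Defs
begin

text \<open>By exchangeability, the probability that at most \<open>m\<close> of the first \<open>2n\<close> symbols lie
  between \<open>x\<close> and \<open>y\<close> depends only on whether \<open>x\<close> and \<open>y\<close> carry the same letter. For a fixed
  order and a fixed \<open>x\<close> at most \<open>2(m + 1)\<close> symbols are that close to \<open>x\<close>, since on each side of
  \<open>x\<close> distinct symbols have distinct numbers of symbols between them and \<open>x\<close>; averaging over the
  \<open>n - 1\<close> or \<open>n\<close> equally likely partners of \<open>x\<close> bounds the probability by \<open>2(m + 1)/(n - 1)\<close>,
  which is at most \<open>8/(k + 1)\<close> for \<open>m = n div (k + 1)\<close>, uniformly in \<open>n\<close>. If \<open>d(x,y) = 0\<close>, these
  events occur for all large \<open>n\<close>, for every \<open>k\<close>; hence this has probability zero. Symmetry and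
  the triangle inequality hold for every total order, so positivity on the countably many pairs
  makes \<open>d\<close> a metric almost surely.\<close>

section \<open>Gaps in a strict total order\<close>

definition strict_total_order :: "('a \<Rightarrow> 'a \<Rightarrow> bool) \<Rightarrow> bool" where
  "strict_total_order L \<longleftrightarrow> (\<forall>x. \<not> L x x) \<and> (\<forall>x y z. L x y \<longrightarrow> L y z \<longrightarrow> L x z)
     \<and> (\<forall>x y. x \<noteq> y \<longrightarrow> L x y \<or> L y x)"

lemma strict_total_orderD:
  assumes "strict_total_order L"
  shows "\<not> L x x" and "L x y \<Longrightarrow> L y z \<Longrightarrow> L x z" and "x \<noteq> y \<Longrightarrow> L x y \<or> L y x"
    and "L x y \<Longrightarrow> \<not> L y x"
  using assms unfolding strict_total_order_def by blast+

lemma strict_total_order_converse: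
  "strict_total_order L \<Longrightarrow> strict_total_order (\<lambda>x y. L y x)"
  unfolding strict_total_order_def by metis

definition lies_between :: "('a \<Rightarrow> 'a \<Rightarrow> bool) \<Rightarrow> 'a \<Rightarrow> 'a \<Rightarrow> 'a \<Rightarrow> bool" where
  "lies_between L x y z \<longleftrightarrow> L x z \<and> L z y \<or> L y z \<and> L z x"

lemma lies_between_iff:
  assumes "strict_total_order L" "L x y"
  shows "lies_between L x y z \<longleftrightarrow> L x z \<and> L z y"
  using assms(2) strict_total_orderD(2)[OF assms(1), of y z x] strict_total_orderD(4)[OF assms(1), of x y]
  unfolding lies_between_def by auto

definition gap :: "('a \<Rightarrow> 'a \<Rightarrow> bool) \<Rightarrow> 'a set \<Rightarrow> 'a \<Rightarrow> 'a \<Rightarrow> nat" where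
  "gap L F x y = card {z\<in>F. lies_between L x y z}"

lemma gap_commute: "gap L F x y = gap L F y x"
  unfolding gap_def lies_between_def by (simp add: disj_commute)

lemma gap_converse: "gap (\<lambda>a b. L b a) F x y = gap L F x y"
  unfolding gap_def lies_between_def by (simp add: disj_commute conj_commute)

lemma gap_strict_mono:
  assumes L: "strict_total_order L" and "finite F" "y \<in> F" "L x y" "L y y'"
  shows "gap L F x y < gap L F x y'"
  unfolding gap_def
proof (rule psubset_card_mono)
  show "finite {z\<in>F. lies_between L x y' z}" using \<open>finite F\<close> by simp
  have xy': "L x y'" using strict_total_orderD(2)[OF L \<open>L x y\<close> \<open>L y y'\<close>] .
  have "{z\<in>F. lies_between L x y z} \<subseteq> {z\<in>F. lies_between L x y' z}"
    using strict_total_orderD(2)[OF L, of _ y y'] \<open>L y y'\<close> by (auto simp: lies_between_iff[OF L] assms xy')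
  moreover have "y \<in> {z\<in>F. lies_between L x y' z}" "y \<notin> {z\<in>F. lies_between L x y z}"
    using assms strict_total_orderD(1)[OF L] by (auto simp: lies_between_iff[OF L] xy')
  ultimately show "{z\<in>F. lies_between L x y z} \<subset> {z\<in>F. lies_between L x y' z}" by blast
qed

lemma card_upper_close_le:
  assumes L: "strict_total_order L" and F: "finite F"
  shows "card {y\<in>F. L x y \<and> gap L F x y \<le> m} \<le> Suc m"
proof -
  have inj: "inj_on (gap L F x) {y\<in>F. L x y}"
  proof (rule inj_onI, rule ccontr)
    fix y y' assume y: "y \<in> {y\<in>F. L x y}" "y' \<in> {y\<in>F. L x y}"
      and eq: "gap L F x y = gap L F x y'" and "y \<noteq> y'"
    then consider "L y y'" | "L y' y" using strict_total_orderD(3)[OF L, of y y'] by blast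
    then show False
      using gap_strict_mono[OF L F, of y x y'] gap_strict_mono[OF L F, of y' x y] y eq by cases auto
  qed
  have "card {y\<in>F. L x y \<and> gap L F x y \<le> m} \<le> card {..m}"
    by (rule card_inj_on_le[OF inj_on_subset[OF inj]]) auto
  then show ?thesis by simp
qed

lemma card_close_le:
  assumes L: "strict_total_order L" and F: "finite F"
  shows "card {y\<in>F. y \<noteq> x \<and> gap L F x y \<le> m} \<le> 2 * Suc m"
proof -
  let ?L' = "\<lambda>a b. L b a"
  have "{y\<in>F. y \<noteq> x \<and> gap L F x y \<le> m}
      \<subseteq> {y\<in>F. L x y \<and> gap L F x y \<le> m} \<union> {y\<in>F. ?L' x y \<and> gap ?L' F x y \<le> m}"
  proof
    fix y assume "y \<in> {y\<in>F. y \<noteq> x \<and> gap L F x y \<le> m}"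
    then show "y \<in> {y\<in>F. L x y \<and> gap L F x y \<le> m} \<union> {y\<in>F. ?L' x y \<and> gap ?L' F x y \<le> m}"
      using strict_total_orderD(3)[OF L, of x y] by (auto simp: gap_converse[of L])
  qed
  then have "card {y\<in>F. y \<noteq> x \<and> gap L F x y \<le> m}
      \<le> card ({y\<in>F. L x y \<and> gap L F x y \<le> m} \<union> {y\<in>F. ?L' x y \<and> gap ?L' F x y \<le> m})"
    using F by (intro card_mono) auto
  also have "\<dots> \<le> card {y\<in>F. L x y \<and> gap L F x y \<le> m} + card {y\<in>F. ?L' x y \<and> gap ?L' F x y \<le> m}"
    by (rule card_Un_le)
  also have "\<dots> \<le> Suc m + Suc m"
    using card_upper_close_le[OF L F] card_upper_close_le[OF strict_total_order_converse[OF L] F]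
    by (rule add_mono)
  finally show ?thesis by simp
qed

section \<open>Upper densities\<close>

definition half_upper_density :: "(nat \<Rightarrow> nat) \<Rightarrow> real" where
  "half_upper_density c = real_of_ereal (limsup (\<lambda>n. ereal (real (c n) / (2 * real n))))"

lemma limsup_half_density_bounds:
  assumes "\<And>n. c n \<le> n"
  shows "0 \<le> limsup (\<lambda>n. ereal (real (c n) / (2 * real n)))"
    and "limsup (\<lambda>n. ereal (real (c n) / (2 * real n))) \<le> ereal (1/2)"
proof -
  let ?f = "\<lambda>n. ereal (real (c n) / (2 * real n))"
  have "0 \<le> liminf ?f" by (intro Liminf_bounded always_eventually) simp
  then show "0 \<le> limsup ?f" using Liminf_le_Limsup[of sequentially ?f] by simp
  have "?f n \<le> ereal (1/2)" for n
    using assms[of n] by (cases "n = 0") (simp_all add: field_simps)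
  then show "limsup ?f \<le> ereal (1/2)" by (intro Limsup_bounded always_eventually) auto
qed

lemma ereal_half_upper_density:
  assumes "\<And>n. c n \<le> n"
  shows "ereal (half_upper_density c) = limsup (\<lambda>n. ereal (real (c n) / (2 * real n)))"
  using limsup_half_density_bounds[OF assms] unfolding half_upper_density_def
  by (cases "limsup (\<lambda>n. ereal (real (c n) / (2 * real n)))") auto

lemma half_upper_density_nonneg:
  assumes "\<And>n. c n \<le> n"
  shows "0 \<le> half_upper_density c"
  using limsup_half_density_bounds(1)[OF assms] by (simp flip: ereal_half_upper_density[OF assms])

lemma half_upper_density_mono:
  assumes "\<And>n. c n \<le> c' n" "\<And>n. c' n \<le> n"
  shows "half_upper_density c \<le> half_upper_density c'"
proof -
  have "\<And>n. c n \<le> n" using assms le_trans by blast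
  moreover have "limsup (\<lambda>n. ereal (real (c n) / (2 * real n)))
      \<le> limsup (\<lambda>n. ereal (real (c' n) / (2 * real n)))"
    using assms(1) by (intro Limsup_mono always_eventually) (auto intro!: divide_right_mono)
  ultimately have "ereal (half_upper_density c) \<le> ereal (half_upper_density c')"
    using assms(2) by (simp only: ereal_half_upper_density)
  then show ?thesis by simp
qed

lemma half_upper_density_subadditive:
  assumes "\<And>n. c n \<le> c1 n + c2 n + 1" "\<And>n. c n \<le> n" "\<And>n. c1 n \<le> n" "\<And>n. c2 n \<le> n"
  shows "half_upper_density c \<le> half_upper_density c1 + half_upper_density c2"
proof -
  let ?f = "\<lambda>c n. ereal (real (c n) / (2 * real n))"
  let ?h = "\<lambda>n. ereal (1 / (2 * real n))"
  have "?f c n \<le> (?f c1 n + ?f c2 n) + ?h n" for n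
    using assms(1)[of n] by (cases "n = 0") (simp_all add: add_divide_distrib[symmetric] divide_right_mono)
  then have "limsup (?f c) \<le> limsup (\<lambda>n. (?f c1 n + ?f c2 n) + ?h n)"
    by (intro Limsup_mono always_eventually) auto
  also have "\<dots> \<le> limsup (\<lambda>n. ?f c1 n + ?f c2 n) + limsup ?h"
    by (rule ereal_limsup_add_mono)
  also have "limsup ?h = 0"
  proof (rule lim_imp_Limsup)
    have "(\<lambda>n. 1 / (2 * real n)) \<longlonglongrightarrow> 0"
      using lim_const_over_n[of "1/2"] by simp
    then show "?h \<longlonglongrightarrow> 0" by (simp add: zero_ereal_def tendsto_ereal)
  qed simp
  also have "limsup (\<lambda>n. ?f c1 n + ?f c2 n) \<le> limsup (?f c1) + limsup (?f c2)"
    by (rule ereal_limsup_add_mono)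
  finally show ?thesis
    using assms(2-4) by (simp flip: ereal_half_upper_density)
qed

lemma eventually_less_if_half_upper_density_zero:
  assumes "\<And>n. c n \<le> n" "half_upper_density c = 0" "e > 0"
  shows "eventually (\<lambda>n. real (c n) < e * real n) sequentially"
proof -
  have "limsup (\<lambda>n. ereal (real (c n) / (2 * real n))) < ereal (e / 2)"
    using assms by (simp flip: ereal_half_upper_density)
  then have "eventually (\<lambda>n. ereal (real (c n) / (2 * real n)) < ereal (e / 2)) sequentially"
    by (rule Limsup_lessD)
  with eventually_gt_at_top[of 0] show ?thesis
    by eventually_elim (simp add: field_simps)
qed

section \<open>The distance induced by a total order\<close>

definition count_between :: "(nat \<Rightarrow> 'a) \<Rightarrow> ('a \<Rightarrow> 'a \<Rightarrow> bool) \<Rightarrow> 'a \<Rightarrow> 'a \<Rightarrow> nat \<Rightarrow> nat" where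
  "count_between C L x y n = card {k. k < n \<and> L x (C k) \<and> L (C k) y}"

lemma count_between_le: "count_between C L x y n \<le> n"
  unfolding count_between_def using card_mono[of "{..<n}" "{k. k < n \<and> L x (C k) \<and> L (C k) y}"] by auto

lemma count_between_mono_right:
  assumes L: "strict_total_order L" and "L y y'"
  shows "count_between C L x y n \<le> count_between C L x y' n"
  unfolding count_between_def
  using strict_total_orderD(2)[OF L, of _ y y'] \<open>L y y'\<close> by (intro card_mono) auto

lemma count_between_mono_left:
  assumes L: "strict_total_order L" and "L x x'"
  shows "count_between C L x' y n \<le> count_between C L x y n"
  unfolding count_between_def
  using strict_total_orderD(2)[OF L, of x x'] \<open>L x x'\<close> by (intro card_mono) auto

text \<open>The summand 1 accounts for \<open>y\<close> itself, which may be one of the counted points.\<close>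
lemma count_between_subadditive:
  assumes L: "strict_total_order L" and "inj C"
  shows "count_between C L x z n \<le> count_between C L x y n + count_between C L y z n + 1"
proof -
  let ?S = "\<lambda>u v. {k. k < n \<and> L u (C k) \<and> L (C k) v}"
  have "?S x z \<subseteq> (?S x y \<union> ?S y z) \<union> {k. k < n \<and> C k = y}"
  proof
    fix k assume "k \<in> ?S x z"
    then show "k \<in> (?S x y \<union> ?S y z) \<union> {k. k < n \<and> C k = y}"
      using strict_total_orderD(3)[OF L, of "C k" y] by auto
  qed
  then have "card (?S x z) \<le> card ((?S x y \<union> ?S y z) \<union> {k. k < n \<and> C k = y})"
    by (intro card_mono) auto
  also have "\<dots> \<le> card (?S x y) + card (?S y z) + card {k. k < n \<and> C k = y}"
    using card_Un_le[of "?S x y" "?S y z"] card_Un_le[of "?S x y \<union> ?S y z" "{k. k < n \<and> C k = y}"]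
    by linarith
  also have "card {k. k < n \<and> C k = y} \<le> 1"
    using \<open>inj C\<close> by (auto simp: card_le_Suc0_iff_eq inj_def)
  finally show ?thesis unfolding count_between_def by simp
qed

lemma d_pos_eq: "d_pos L x y = half_upper_density (count_between A L x y)
    + half_upper_density (count_between B L x y)"
  unfolding d_pos_def half_upper_density_def count_between_def ..

lemma d_pos_nonneg: "0 \<le> d_pos L x y"
  unfolding d_pos_eq by (intro add_nonneg_nonneg half_upper_density_nonneg count_between_le)

lemma d_pos_mono_right: "strict_total_order L \<Longrightarrow> L y y' \<Longrightarrow> d_pos L x y \<le> d_pos L x y'"
  unfolding d_pos_eq by (intro add_mono half_upper_density_mono count_between_mono_right count_between_le)

lemma d_pos_mono_left: "strict_total_order L \<Longrightarrow> L x x' \<Longrightarrow> d_pos L x' y \<le> d_pos L x y"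
  unfolding d_pos_eq by (intro add_mono half_upper_density_mono count_between_mono_left count_between_le)

lemma d_pos_subadditive:
  assumes "strict_total_order L"
  shows "d_pos L x z \<le> d_pos L x y + d_pos L y z"
proof -
  have "half_upper_density (count_between C L x z)
      \<le> half_upper_density (count_between C L x y) + half_upper_density (count_between C L y z)"
    if "inj C" for C :: "nat \<Rightarrow> I0"
    by (intro half_upper_density_subadditive count_between_subadditive assms that count_between_le)
  from this[of A] this[of B] show ?thesis unfolding d_pos_eq by (simp add: inj_def)
qed

lemma dist_ord_eq_d_pos: "strict_total_order L \<Longrightarrow> L x y \<Longrightarrow> dist_ord L x y = d_pos L x y"
  unfolding dist_ord_def using strict_total_orderD(1) by metis

lemma dist_ord_commute: "strict_total_order L \<Longrightarrow> dist_ord L x y = dist_ord L y x"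
  unfolding dist_ord_def using strict_total_orderD(3,4)[of L x y] by auto

lemma dist_ord_nonneg: "0 \<le> dist_ord L x y"
  unfolding dist_ord_def by (simp add: d_pos_nonneg)

lemma dist_ord_triangle:
  assumes L: "strict_total_order L"
  shows "dist_ord L x z \<le> dist_ord L x y + dist_ord L y z"
proof -
  have ordered: "dist_ord L x z \<le> dist_ord L x y + dist_ord L y z" if "L x z" for x y z
  proof -
    have xz: "dist_ord L x z = d_pos L x z" by (rule dist_ord_eq_d_pos[OF L that])
    consider "y = x" | "y = z" | (below) "L y x" | (inside) "L x y" "L y z" | (above) "L z y"
      using strict_total_orderD(3)[OF L, of y x] strict_total_orderD(3)[OF L, of y z] by blast
    then show ?thesis
    proof cases
      case below
      then show ?thesis using d_pos_mono_left[OF L below, of z] dist_ord_nonneg[of L x y]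
        by (simp add: xz dist_ord_eq_d_pos[OF L] dist_ord_eq_d_pos[OF L strict_total_orderD(2)[OF L below that]])
    next
      case inside
      then show ?thesis using d_pos_subadditive[OF L] by (simp add: xz dist_ord_eq_d_pos[OF L])
    next
      case above
      then show ?thesis using d_pos_mono_right[OF L above, of x] dist_ord_nonneg[of L y z]
        by (simp add: xz dist_ord_eq_d_pos[OF L] dist_ord_eq_d_pos[OF L strict_total_orderD(2)[OF L that above]])
    qed (use dist_ord_nonneg in \<open>simp_all add: dist_ord_def\<close>)
  qed
  consider "x = z" | "L x z" | (reversed) "L z x" using strict_total_orderD(3)[OF L, of x z] by blast
  then show ?thesis
  proof cases
    case reversed
    then show ?thesis
      using ordered[OF reversed, of y] dist_ord_commute[OF L, of z x] dist_ord_commute[OF L, of z y]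
        dist_ord_commute[OF L, of y x] by linarith
  qed (use ordered dist_ord_nonneg in \<open>simp_all add: dist_ord_def add_nonneg_nonneg\<close>)
qed

lemma is_metric_dist_ord:
  assumes "strict_total_order L" and "\<And>x y. x \<noteq> y \<Longrightarrow> 0 < dist_ord L x y"
  shows "is_metric (dist_ord L)"
  unfolding is_metric_def
  using assms dist_ord_commute[OF assms(1)] dist_ord_triangle[OF assms(1)]
  by (metis dist_ord_def less_irrefl)

lemma gap_first_n:
  assumes L: "strict_total_order L" and "L x y"
  shows "gap L (first_n n) x y = count_between A L x y n + count_between B L x y n"
proof -
  have "{z\<in>first_n n. lies_between L x y z}
      = A ` {k. k < n \<and> L x (A k) \<and> L (A k) y} \<union> B ` {k. k < n \<and> L x (B k) \<and> L (B k) y}"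
    by (auto simp: first_n_def lies_between_iff[OF assms])
  moreover have "card (A ` {k. k < n \<and> L x (A k) \<and> L (A k) y} \<union> B ` {k. k < n \<and> L x (B k) \<and> L (B k) y})
      = card {k. k < n \<and> L x (A k) \<and> L (A k) y} + card {k. k < n \<and> L x (B k) \<and> L (B k) y}"
    by (subst card_Un_disjoint) (auto simp: card_image inj_on_def)
  ultimately show ?thesis unfolding gap_def count_between_def by simp
qed

lemma eventually_gap_less_if_dist_ord_zero:
  assumes L: "strict_total_order L" and "x \<noteq> y" "\<not> 0 < dist_ord L x y" "e > 0"
  shows "eventually (\<lambda>n. real (gap L (first_n n) x y) < e * real n) sequentially"
proof -
  have ordered: "eventually (\<lambda>n. real (gap L (first_n n) x y) < e * real n) sequentially"
    if "L x y" "\<not> 0 < d_pos L x y" for x y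
  proof -
    have nonneg: "0 \<le> half_upper_density (count_between C L x y)" for C :: "nat \<Rightarrow> I0"
      by (rule half_upper_density_nonneg) (rule count_between_le)
    have "half_upper_density (count_between A L x y) = 0" "half_upper_density (count_between B L x y) = 0"
      using \<open>\<not> 0 < d_pos L x y\<close> nonneg[of A] nonneg[of B] unfolding d_pos_eq by linarith+
    moreover have "eventually (\<lambda>n. real (count_between C L x y n) < e / 2 * real n) sequentially"
      if "half_upper_density (count_between C L x y) = 0" for C :: "nat \<Rightarrow> I0"
      using \<open>e > 0\<close> eventually_less_if_half_upper_density_zero[where c = "count_between C L x y",
          OF count_between_le that, of "e / 2"] by simp
    ultimately have "eventually (\<lambda>n. real (count_between A L x y n) < e / 2 * real n) sequentially"
      "eventually (\<lambda>n. real (count_between B L x y n) < e / 2 * real n) sequentially"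
      by blast+
    then show ?thesis
      by eventually_elim (simp add: gap_first_n[OF L \<open>L x y\<close>])
  qed
  consider "L x y" | "L y x" using strict_total_orderD(3)[OF L \<open>x \<noteq> y\<close>] by blast
  then show ?thesis
  proof cases
    case 1
    then show ?thesis using ordered assms by (simp add: dist_ord_eq_d_pos[OF L])
  next
    case 2
    then show ?thesis using ordered[OF 2] assms
      by (simp add: dist_ord_commute[OF L, of x y] dist_ord_eq_d_pos[OF L] gap_commute)
  qed
qed

section \<open>Measurability and relabelling\<close>

lemma pred_gap_le:
  assumes "finite F" and [measurable]: "\<And>a b. Measurable.pred M (\<lambda>w. L w a b)"
  shows "Measurable.pred M (\<lambda>w. gap (L w) F x y \<le> m)"
proof -
  have "real (gap (L w) F x y) = (\<Sum>z\<in>F. if lies_between (L w) x y z then 1 else 0)" for w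
    unfolding gap_def using assms(1) by (simp add: sum.If_cases Int_def)
  then have "gap (L w) F x y \<le> m \<longleftrightarrow> (\<Sum>z\<in>F. if lies_between (L w) x y z then 1 else 0) \<le> real m" for w
    by (metis of_nat_le_iff)
  moreover have "Measurable.pred M (\<lambda>w. (\<Sum>z\<in>F. if lies_between (L w) x y z then 1 else 0) \<le> real m)"
    unfolding lies_between_def by measurable
  ultimately show ?thesis by simp
qed

lemma first_n_iff [simp]: "A i \<in> first_n n \<longleftrightarrow> i < n" "B i \<in> first_n n \<longleftrightarrow> i < n"
  by (auto simp: first_n_def)

lemma finite_first_n [simp]: "finite (first_n n)"
  by (simp add: first_n_def)

lemma eventually_in_first_n: "eventually (\<lambda>n. z \<in> first_n n) sequentially"
  by (cases z) (simp_all add: eventually_gt_at_top)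

lemma measure_eq_if_level_sets_eq:
  fixes f g :: "'w \<Rightarrow> 'r"
  assumes "finite_measure M" and "finite P"
    and "\<And>w. w \<in> space M \<Longrightarrow> f w \<in> P" "\<And>w. w \<in> space M \<Longrightarrow> g w \<in> P"
    and "\<And>R. {w\<in>space M. f w = R} \<in> sets M" "\<And>R. {w\<in>space M. g w = R} \<in> sets M"
    and "\<And>R. measure M {w\<in>space M. f w = R} = measure M {w\<in>space M. g w = R}"
  shows "measure M {w\<in>space M. f w \<in> S} = measure M {w\<in>space M. g w \<in> S}"
proof -
  interpret finite_measure M by fact
  have sum: "measure M {w\<in>space M. h w \<in> S} = (\<Sum>R\<in>S \<inter> P. measure M {w\<in>space M. h w = R})"
    if "\<And>w. w \<in> space M \<Longrightarrow> h w \<in> P" "\<And>R. {w\<in>space M. h w = R} \<in> sets M" for h :: "'w \<Rightarrow> 'r"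
  proof -
    have "{w\<in>space M. h w \<in> S} = (\<Union>R\<in>S \<inter> P. {w\<in>space M. h w = R})"
      using that(1) by auto
    also have "measure M \<dots> = (\<Sum>R\<in>S \<inter> P. measure M {w\<in>space M. h w = R})"
      using that(2) \<open>finite P\<close>
      by (intro finite_measure_finite_Union) (auto simp: disjoint_family_on_def)
    finally show ?thesis .
  qed
  show ?thesis using sum[of f] sum[of g] assms(3-7) by simp
qed

lemma sets_restr_ord_eq:
  assumes [measurable]: "\<And>a b. Measurable.pred M (\<lambda>w. L w a b)"
  shows "{w\<in>space M. restr_ord (L w) n = R} \<in> sets M"
proof -
  let ?F = "first_n n \<times> first_n n"
  have eq: "restr_ord (L w) n = R \<longleftrightarrow> R \<subseteq> ?F \<and> (\<forall>p\<in>?F. L w (fst p) (snd p) = (p \<in> R))" for w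
    by (auto simp: restr_ord_def)
  have "Measurable.pred M (\<lambda>w. R \<subseteq> ?F \<and> (\<forall>p\<in>?F. L w (fst p) (snd p) = (p \<in> R)))"
    by measurable
  then show ?thesis unfolding eq by (simp add: Measurable.pred_def)
qed

lemma relabel_inverse:
  assumes "\<sigma> permutes S" "\<tau> permutes T"
  shows "relabel \<sigma> \<tau> (relabel (inv \<sigma>) (inv \<tau>) z) = z"
    and "relabel (inv \<sigma>) (inv \<tau>) (relabel \<sigma> \<tau> z) = z"
  using permutes_inverses[OF assms(1)] permutes_inverses[OF assms(2)]
  by (cases z; simp add: relabel_def)+

lemma relabel_in_first_n_iff:
  assumes "\<sigma> permutes {..<n}" "\<tau> permutes {..<n}"
  shows "relabel \<sigma> \<tau> z \<in> first_n n \<longleftrightarrow> z \<in> first_n n"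
  using permutes_in_image[OF assms(1)] permutes_in_image[OF assms(2)]
  by (cases z) (simp_all add: relabel_def)

lemma perm_restr_ord_eq_restr_ord:
  assumes "\<sigma> permutes {..<n}" "\<tau> permutes {..<n}"
  shows "perm_restr_ord \<sigma> \<tau> L n
    = restr_ord (\<lambda>a b. L (relabel (inv \<sigma>) (inv \<tau>) a) (relabel (inv \<sigma>) (inv \<tau>) b)) n"
proof -
  let ?p = "relabel \<sigma> \<tau>" and ?q = "relabel (inv \<sigma>) (inv \<tau>)"
  have q_in: "?q z \<in> first_n n \<longleftrightarrow> z \<in> first_n n" for z
    by (intro relabel_in_first_n_iff permutes_inv assms)
  have "(u, v) \<in> perm_restr_ord \<sigma> \<tau> L n \<longleftrightarrow> (u, v) \<in> restr_ord (\<lambda>a b. L (?q a) (?q b)) n" for u v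
  proof
    assume "(u, v) \<in> perm_restr_ord \<sigma> \<tau> L n"
    then obtain a b where "(a, b) \<in> restr_ord L n" "u = ?p a" "v = ?p b"
      by (auto simp: perm_restr_ord_def)
    then show "(u, v) \<in> restr_ord (\<lambda>a b. L (?q a) (?q b)) n"
      using q_in relabel_in_first_n_iff[OF assms] relabel_inverse[OF assms] by (auto simp: restr_ord_def)
  next
    assume "(u, v) \<in> restr_ord (\<lambda>a b. L (?q a) (?q b)) n"
    then have "(?q u, ?q v) \<in> restr_ord L n" using q_in by (auto simp: restr_ord_def)
    then have "(?p (?q u), ?p (?q v)) \<in> perm_restr_ord \<sigma> \<tau> L n"
      unfolding perm_restr_ord_def by force
    then show "(u, v) \<in> perm_restr_ord \<sigma> \<tau> L n" using relabel_inverse[OF assms] by simp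
  qed
  then show ?thesis by auto
qed

lemma gap_restr_ord:
  assumes "x \<in> first_n n" "y \<in> first_n n"
  shows "gap (\<lambda>a b. (a, b) \<in> restr_ord L n) (first_n n) x y = gap L (first_n n) x y"
proof -
  have "{z\<in>first_n n. lies_between (\<lambda>a b. (a, b) \<in> restr_ord L n) x y z}
      = {z\<in>first_n n. lies_between L x y z}"
    using assms by (auto simp: lies_between_def restr_ord_def)
  then show ?thesis by (simp add: gap_def)
qed

lemma gap_bij_betw:
  assumes "bij_betw p F F"
  shows "gap (\<lambda>a b. L (p a) (p b)) F x y = gap L F (p x) (p y)"
proof -
  let ?S = "{z\<in>F. lies_between (\<lambda>a b. L (p a) (p b)) x y z}"
  have "p ` ?S = {z\<in>F. lies_between L (p x) (p y) z}"
  proof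
    show "p ` ?S \<subseteq> {z\<in>F. lies_between L (p x) (p y) z}"
      using bij_betw_apply[OF assms] by (auto simp: lies_between_def)
    show "{z\<in>F. lies_between L (p x) (p y) z} \<subseteq> p ` ?S"
    proof
      fix u assume u: "u \<in> {z\<in>F. lies_between L (p x) (p y) z}"
      then obtain z where "z \<in> F" "u = p z"
        using bij_betw_imp_surj_on[OF assms] by blast
      with u show "u \<in> p ` ?S" by (auto simp: lies_between_def)
    qed
  qed
  moreover have "inj_on p ?S"
    using bij_betw_imp_inj_on[OF assms] by (rule inj_on_subset) auto
  ultimately show ?thesis
    unfolding gap_def using card_image by fastforce
qed

lemma (in prob_space) AE_not_eventually_if_prob_tendsto_zero:
  assumes sets: "\<And>k n. E k n \<in> events"
    and bound: "\<And>k n. n \<ge> n0 k \<Longrightarrow> prob (E k n) \<le> b k" and "b \<longlonglongrightarrow> 0"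
  shows "AE w in M. \<exists>k. \<not> eventually (\<lambda>n. w \<in> E k n) sequentially"
proof -
  let ?Z = "\<lambda>k. {w\<in>space M. eventually (\<lambda>n. w \<in> E k n) sequentially}"
  let ?Y = "\<lambda>k N. {w\<in>space M. \<forall>n\<ge>N. w \<in> E k n}"
  let ?Z_all = "{w\<in>space M. \<forall>k. eventually (\<lambda>n. w \<in> E k n) sequentially}"
  have [measurable]: "E k n \<in> events" for k n by (rule sets)
  have prob_Z: "prob (?Z k) \<le> b k" for k
  proof -
    have "(\<lambda>N. prob (?Y k N)) \<longlonglongrightarrow> prob (\<Union>N. ?Y k N)"
      by (intro finite_Lim_measure_incseq) (auto simp: incseq_def)
    moreover have "prob (?Y k N) \<le> b k" for N
    proof -
      have "?Y k N \<subseteq> E k (max N (n0 k))" by auto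
      then have "prob (?Y k N) \<le> prob (E k (max N (n0 k)))" by (rule finite_measure_mono) (rule sets)
      also have "\<dots> \<le> b k" by (rule bound) simp
      finally show ?thesis .
    qed
    ultimately have "prob (\<Union>N. ?Y k N) \<le> b k" by (intro LIMSEQ_le_const2) auto
    moreover have "?Z k = (\<Union>N. ?Y k N)" by (auto simp: eventually_sequentially)
    ultimately show ?thesis by simp
  qed
  have "prob ?Z_all \<le> b k" for k
  proof -
    have "?Z_all \<subseteq> ?Z k" by auto
    then have "prob ?Z_all \<le> prob (?Z k)" by (rule finite_measure_mono) measurable
    then show ?thesis using prob_Z[of k] by linarith
  qed
  then have "prob ?Z_all \<le> 0" by (intro LIMSEQ_le_const[OF \<open>b \<longlonglongrightarrow> 0\<close>]) auto
  then have "prob ?Z_all = 0" using measure_nonneg[of M ?Z_all] by linarith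
  then show ?thesis by (subst (asm) prob_Collect_eq_0) auto
qed

section \<open>Exchangeable random orders\<close>

locale exchangeable_random_order = prob_space M
  for M :: "'w measure" and lt :: "'w \<Rightarrow> I0 \<Rightarrow> I0 \<Rightarrow> bool" +
  assumes random_total_order: "random_total_order M lt"
    and exchangeable: "exchangeable M lt"
begin

lemma strict_total_order_lt: "w \<in> space M \<Longrightarrow> strict_total_order (lt w)"
  using random_total_order by (simp add: random_total_order_def strict_total_order_def)

lemma pred_lt [measurable]: "Measurable.pred M (\<lambda>w. lt w x y)"
  using random_total_order by (simp add: random_total_order_def Measurable.pred_def)

definition close_event :: "nat \<Rightarrow> nat \<Rightarrow> I0 \<Rightarrow> I0 \<Rightarrow> 'w set" where
  "close_event n m x y = {w\<in>space M. gap (lt w) (first_n n) x y \<le> m}"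

lemma close_event_in_events [measurable]: "close_event n m x y \<in> events"
  using pred_gap_le[OF finite_first_n pred_lt] unfolding close_event_def Measurable.pred_def .

lemma close_event_commute: "close_event n m x y = close_event n m y x"
  unfolding close_event_def by (simp add: gap_commute)

text \<open>The event depends on the order only through its restriction to \<open>first_n n\<close>, and exchangeability
  says that relabelling does not change the distribution of that restriction.\<close>
lemma prob_close_event_relabel:
  assumes perm: "\<sigma> permutes {..<n}" "\<tau> permutes {..<n}" and "x \<in> first_n n" "y \<in> first_n n"
  shows "prob (close_event n m x y)
    = prob (close_event n m (relabel (inv \<sigma>) (inv \<tau>) x) (relabel (inv \<sigma>) (inv \<tau>) y))"
proof -
  let ?q = "relabel (inv \<sigma>) (inv \<tau>)"
  let ?S = "{R. gap (\<lambda>a b. (a, b) \<in> R) (first_n n) x y \<le> m}"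
  have "bij_betw ?q (first_n n) (first_n n)"
    by (rule bij_betw_byWitness[where f' = "relabel \<sigma> \<tau>"])
      (auto simp: relabel_inverse[OF perm] relabel_in_first_n_iff[OF perm]
        relabel_in_first_n_iff[OF permutes_inv[OF perm(1)] permutes_inv[OF perm(2)]])
  then have "gap (\<lambda>a b. lt w (?q a) (?q b)) (first_n n) x y = gap (lt w) (first_n n) (?q x) (?q y)" for w
    by (rule gap_bij_betw)
  moreover have "prob {w\<in>space M. restr_ord (lt w) n \<in> ?S}
      = prob {w\<in>space M. restr_ord (\<lambda>a b. lt w (?q a) (?q b)) n \<in> ?S}"
  proof (rule measure_eq_if_level_sets_eq[where P = "Pow (first_n n \<times> first_n n)"])
    show "prob {w\<in>space M. restr_ord (lt w) n = R}
        = prob {w\<in>space M. restr_ord (\<lambda>a b. lt w (?q a) (?q b)) n = R}" for R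
    proof -
      have "prob {w\<in>space M. restr_ord (lt w) n = R} = prob {w\<in>space M. perm_restr_ord \<sigma> \<tau> (lt w) n = R}"
        using exchangeable perm unfolding exchangeable_def by blast
      then show ?thesis by (simp add: perm_restr_ord_eq_restr_ord[OF perm])
    qed
    show "{w\<in>space M. restr_ord (lt w) n = R} \<in> sets M" for R
      by (rule sets_restr_ord_eq) measurable
    show "{w\<in>space M. restr_ord (\<lambda>a b. lt w (?q a) (?q b)) n = R} \<in> sets M" for R
      by (rule sets_restr_ord_eq) measurable
  qed (auto simp: restr_ord_def intro: finite_measure_axioms)
  ultimately show ?thesis
    using assms(3,4) by (simp add: close_event_def gap_restr_ord)
qed

lemma prob_close_event_move_first:
  assumes C: "C = A \<or> C = B" and "i < n" "j < n" "k < n" "i \<noteq> j" "k \<noteq> j"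
  shows "prob (close_event n m (C i) (C j)) = prob (close_event n m (C k) (C j))"
proof -
  have t: "Transposition.transpose i k permutes {..<n}" using assms by (intro permutes_swap_id) auto
  from C show ?thesis
  proof
    assume "C = A"
    then show ?thesis
      using prob_close_event_relabel[OF t permutes_id, of "C i" "C j" m] assms by (simp add: relabel_def)
  next
    assume "C = B"
    then show ?thesis
      using prob_close_event_relabel[OF permutes_id t, of "C i" "C j" m] assms by (simp add: relabel_def)
  qed
qed

lemma prob_close_event_same_letter:
  assumes C: "C = A \<or> C = B" and "i < n" "j < n" "i' < n" "j' < n" "i \<noteq> j" "i' \<noteq> j'"
  shows "prob (close_event n m (C i) (C j)) = prob (close_event n m (C i') (C j'))"
proof (cases "i' = j")
  case False
  have "prob (close_event n m (C i) (C j)) = prob (close_event n m (C i') (C j))"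
    by (rule prob_close_event_move_first[OF C]) (use assms False in auto)
  also have "\<dots> = prob (close_event n m (C j') (C i'))"
    unfolding close_event_commute[of n m "C i'"]
    by (rule prob_close_event_move_first[OF C]) (use assms False in auto)
  finally show ?thesis by (simp add: close_event_commute)
next
  case True
  show ?thesis
  proof (cases "j' = i")
    case False
    have "prob (close_event n m (C i) (C j)) = prob (close_event n m (C j') (C i))"
      unfolding close_event_commute[of n m "C i"]
      by (rule prob_close_event_move_first[OF C]) (use assms True False in auto)
    also have "\<dots> = prob (close_event n m (C i') (C j'))"
      unfolding close_event_commute[of n m "C j'"]
      by (rule prob_close_event_move_first[OF C]) (use assms True False in auto)
    finally show ?thesis .
  qed (use True in \<open>simp add: close_event_commute\<close>)
qed

lemma prob_close_event_mixed:
  assumes "i < n" "j < n" "i' < n" "j' < n"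
  shows "prob (close_event n m (A i) (B j)) = prob (close_event n m (A i') (B j'))"
proof -
  have "Transposition.transpose i i' permutes {..<n}" "Transposition.transpose j j' permutes {..<n}"
    using assms by (auto intro: permutes_swap_id)
  from prob_close_event_relabel[OF this, of "A i" "B j" m] show ?thesis
    using assms by (simp add: relabel_def)
qed

lemma sum_prob_close_event_le:
  assumes "Y \<subseteq> first_n n - {x}"
  shows "(\<Sum>y\<in>Y. prob (close_event n m x y)) \<le> 2 * (real m + 1)"
proof -
  have "finite Y" using finite_subset[OF assms] by simp
  have "(\<Sum>y\<in>Y. prob (close_event n m x y))
      = expectation (\<lambda>w. \<Sum>y\<in>Y. indicator (close_event n m x y) w)"
    by (subst Bochner_Integration.integral_sum)
      (auto simp: Int_absorb2 sets.sets_into_space integrable_indicator_iff less_top[symmetric])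
  also have "\<dots> \<le> expectation (\<lambda>w. 2 * (real m + 1))"
  proof (rule integral_mono)
    fix w assume w: "w \<in> space M"
    have "(\<Sum>y\<in>Y. indicator (close_event n m x y) w :: real)
        = real (card {y\<in>Y. gap (lt w) (first_n n) x y \<le> m})"
      using \<open>finite Y\<close> w by (simp add: indicator_def close_event_def sum.If_cases Int_def)
    also have "card {y\<in>Y. gap (lt w) (first_n n) x y \<le> m}
        \<le> card {y\<in>first_n n. y \<noteq> x \<and> gap (lt w) (first_n n) x y \<le> m}"
      using assms by (intro card_mono) auto
    also have "\<dots> \<le> 2 * Suc m" by (rule card_close_le[OF strict_total_order_lt[OF w] finite_first_n])
    finally show "(\<Sum>y\<in>Y. indicator (close_event n m x y) w) \<le> 2 * (real m + 1)" by simp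
  qed (auto intro!: Bochner_Integration.integrable_sum
      simp: integrable_indicator_iff less_top[symmetric] Int_absorb2 sets.sets_into_space)
  also have "\<dots> = 2 * (real m + 1)" by (simp add: prob_space)
  finally show ?thesis .
qed

lemma prob_close_event_le_if_many_equal:
  assumes "Y \<subseteq> first_n n - {x}" and "\<And>y'. y' \<in> Y \<Longrightarrow> prob (close_event n m x y') = p"
    and "real n - 1 \<le> real (card Y)" "2 \<le> n"
  shows "p \<le> 2 * (real m + 1) / (real n - 1)"
proof -
  have "(real n - 1) * p \<le> real (card Y) * p"
    using assms(2)[symmetric] assms(3,4) measure_nonneg
    by (cases "Y = {}") (auto intro: mult_right_mono)
  also have "\<dots> = (\<Sum>y\<in>Y. prob (close_event n m x y))" using assms(2) by simp
  also have "\<dots> \<le> 2 * (real m + 1)" by (rule sum_prob_close_event_le[OF assms(1)])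
  finally show ?thesis using \<open>2 \<le> n\<close> by (simp add: field_simps)
qed

lemma prob_close_event_le:
  assumes "x \<noteq> y" "x \<in> first_n n" "y \<in> first_n n" "2 \<le> n"
  shows "prob (close_event n m x y) \<le> 2 * (real m + 1) / (real n - 1)"
proof -
  have same: "prob (close_event n m (C i) (C j)) \<le> 2 * (real m + 1) / (real n - 1)"
    if C: "C = A \<or> C = B" and ij: "i < n" "j < n" "i \<noteq> j" for C i j
  proof (rule prob_close_event_le_if_many_equal)
    have "inj C" using C by (auto simp: inj_def)
    show "C ` ({..<n} - {i}) \<subseteq> first_n n - {C i}"
      using C \<open>inj C\<close> by (auto simp: inj_eq)
    show "real n - 1 \<le> real (card (C ` ({..<n} - {i})))"
      using \<open>inj C\<close> \<open>i < n\<close> by (simp add: card_image inj_on_subset)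
    show "prob (close_event n m (C i) y') = prob (close_event n m (C i) (C j))"
      if y': "y' \<in> C ` ({..<n} - {i})" for y'
    proof -
      obtain j' where "y' = C j'" "j' < n" "j' \<noteq> i" using y' by auto
      then show ?thesis using prob_close_event_same_letter[OF C, of i n j' i j m] ij by simp
    qed
  qed (use \<open>2 \<le> n\<close> in simp)
  have mixed: "prob (close_event n m (A i) (B j)) \<le> 2 * (real m + 1) / (real n - 1)"
    if ij: "i < n" "j < n" for i j
  proof (rule prob_close_event_le_if_many_equal)
    show "B ` {..<n} \<subseteq> first_n n - {A i}" by auto
    show "real n - 1 \<le> real (card (B ` {..<n}))" by (simp add: card_image inj_on_def)
    show "prob (close_event n m (A i) y') = prob (close_event n m (A i) (B j))"
      if y': "y' \<in> B ` {..<n}" for y'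
    proof -
      obtain j' where "y' = B j'" "j' < n" using y' by auto
      then show ?thesis using prob_close_event_mixed[of i n j' i j m] ij by simp
    qed
  qed (use \<open>2 \<le> n\<close> in simp)
  show ?thesis
  proof (cases x)
    case (A i)
    then show ?thesis
      using assms same[of A i] mixed[of i] by (cases y) auto
  next
    case (B i)
    show ?thesis
    proof (cases y)
      case (A j)
      then show ?thesis using assms \<open>x = B i\<close> mixed[of j i] close_event_commute[of n m x y] by simp
    next
      case (B j)
      then show ?thesis using assms \<open>x = B i\<close> same[of B i j] by simp
    qed
  qed
qed

lemma prob_close_event_div_le:
  assumes "x \<noteq> y" "x \<in> first_n n" "y \<in> first_n n" "Suc k \<le> n" "2 \<le> n"
  shows "prob (close_event n (n div Suc k) x y) \<le> 8 / real (Suc k)"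
proof -
  have "real (n div Suc k) * real (Suc k) \<le> real n"
    by (metis div_times_less_eq_dividend of_nat_le_iff of_nat_mult)
  then have "2 * (real (n div Suc k) + 1) * real (Suc k) \<le> 8 * (real n - 1)"
    using assms(4,5) by (simp add: algebra_simps)
  then have "2 * (real (n div Suc k) + 1) / (real n - 1) \<le> 8 / real (Suc k)"
    using assms(5) by (simp add: divide_simps)
  with prob_close_event_le[OF assms(1-3,5), of "n div Suc k"] show ?thesis by linarith
qed

lemma AE_dist_ord_pos:
  assumes "x \<noteq> y"
  shows "AE w in M. 0 < dist_ord (lt w) x y"
proof -
  have "eventually (\<lambda>n. x \<in> first_n n \<and> y \<in> first_n n \<and> 2 \<le> n) sequentially"
    using eventually_in_first_n[of x] eventually_in_first_n[of y] eventually_ge_at_top[of 2]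
    by eventually_elim simp
  then obtain n0 where n0: "\<And>n. n \<ge> n0 \<Longrightarrow> x \<in> first_n n \<and> y \<in> first_n n \<and> 2 \<le> n"
    unfolding eventually_sequentially by blast
  let ?E = "\<lambda>k n. close_event n (n div Suc k) x y"
  have "AE w in M. \<exists>k. \<not> eventually (\<lambda>n. w \<in> ?E k n) sequentially"
  proof (rule AE_not_eventually_if_prob_tendsto_zero)
    show "prob (?E k n) \<le> 8 / real (Suc k)" if "n \<ge> max n0 (Suc k)" for k n
      using that n0 assms by (intro prob_close_event_div_le) auto
    show "(\<lambda>k. 8 / real (Suc k)) \<longlonglongrightarrow> 0"
      using LIMSEQ_Suc[OF lim_const_over_n[of 8]] by simp
  qed simp
  moreover have "AE w in M. w \<in> space M \<and> strict_total_order (lt w)"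
    by (intro AE_I2) (simp add: strict_total_order_lt)
  ultimately show ?thesis
  proof eventually_elim
    case (elim w)
    then have w: "w \<in> space M" and L: "strict_total_order (lt w)" by auto
    show ?case
    proof (rule ccontr)
      assume not_pos: "\<not> 0 < dist_ord (lt w) x y"
      have "eventually (\<lambda>n. w \<in> ?E k n) sequentially" for k
      proof -
        have "eventually (\<lambda>n. real (gap (lt w) (first_n n) x y) < 1 / real (Suc k) * real n) sequentially"
          by (rule eventually_gap_less_if_dist_ord_zero[OF L assms not_pos]) simp
        then show ?thesis
        proof eventually_elim
          case (elim n)
          then have "real (gap (lt w) (first_n n) x y * Suc k) < real n"
            by (simp add: field_simps)
          then have "gap (lt w) (first_n n) x y * Suc k \<le> n" by linarith
          then show ?case
            using w by (simp add: close_event_def less_eq_div_iff_mult_less_eq)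
        qed
      qed
      with elim show False by blast
    qed
  qed
qed

end

instance I0 :: countable
  by countable_datatype

theorem mainTheorem4:
  fixes M :: "'w measure" and lt :: "'w \<Rightarrow> I0 \<Rightarrow> I0 \<Rightarrow> bool"
  assumes "prob_space M"
    and "random_total_order M lt"
    and "exchangeable M lt"
  shows "(\<forall>x y. x \<noteq> y \<longrightarrow> (AE w in M. dist_ord (lt w) x y > 0))
         \<and> (AE w in M. is_metric (dist_ord (lt w)))"
proof -
  interpret exchangeable_random_order M lt
    by (intro exchangeable_random_order.intro exchangeable_random_order_axioms.intro assms)
  have pos: "\<forall>x y. x \<noteq> y \<longrightarrow> (AE w in M. dist_ord (lt w) x y > 0)"
    using AE_dist_ord_pos by blast
  then have "AE w in M. \<forall>x y. x \<noteq> y \<longrightarrow> dist_ord (lt w) x y > 0"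
    by (simp add: AE_all_countable AE_impI)
  moreover have "AE w in M. strict_total_order (lt w)"
    by (intro AE_I2) (rule strict_total_order_lt)
  ultimately have "AE w in M. is_metric (dist_ord (lt w))"
    by eventually_elim (simp add: is_metric_dist_ord)
  with pos show ?thesis by blast
qed

end
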